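(* Let $p$ be a prime and let $G$ be a finite group with $G=PN$, where $1<P\in\mathrm{Syl}_p(G)$, $N\trianglelefteq G$, $\gcd(|P|,|N|)=1$ and $C_N(P)=1$. Then $G$ has a redundant Sylow $p$-subgroup if and only if $C_N(x)>1$ for every $p$-element $x\in G$.
   Context: For a finite group $G$ and a prime $p$, $G_p$ denotes the set of $p$-elements of $G$ and $\mathrm{Syl}_p(G)$ the set of Sylow $p$-subgroups of $G$. $G$ is said to have a redundant Sylow $p$-subgroup if $G_p$ is contained in the union of the members of some proper subset of $\mathrm{Syl}_p(G)$. *)

theory Defs
  imports "HOL-Algebra.Algebra" "HOL-Computational_Algebra.Primes"
begin

definition p_elements :: "('a, 'b) monoid_scheme \<Rightarrow> nat \<Rightarrow> 'a set" where
  "p_elements G p = {x \<in> carrier G. \<exists>n::nat. group.ord G x = p ^ n}"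

definition Sylow_subgroups :: "('a, 'b) monoid_scheme \<Rightarrow> nat \<Rightarrow> 'a set set" where
  "Sylow_subgroups G p = {P. subgroup P G \<and> card P = p ^ multiplicity p (order G)}"

definition has_redundant_Sylow :: "('a, 'b) monoid_scheme \<Rightarrow> nat \<Rightarrow> bool" where
  "has_redundant_Sylow G p \<longleftrightarrow>
     (\<exists>S. S \<subset> Sylow_subgroups G p \<and> p_elements G p \<subseteq> \<Union> S)"

definition centralizer_in :: "('a, 'b) monoid_scheme \<Rightarrow> 'a set \<Rightarrow> 'a set \<Rightarrow> 'a set" where
  "centralizer_in G M A = {y \<in> M. \<forall>x\<in>A. x \<otimes>\<^bsub>G\<^esub> y = y \<otimes>\<^bsub>G\<^esub> x}"

end

theory Submission
  imports Defs
begin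

(*
  Write P^g for g P g^-1. If n is in N and both a and n a n^-1 lie in P, then the commutator
  n a n^-1 a^-1 lies in P and, N being normal, in N; as |P| and |N| are coprime it is trivial, so
  n centralizes a. Together with G = NP and C_N(P) = 1 this shows that the Sylow p-subgroups are
  the P^n, each for exactly one n in N, and that for a in P and n, n' in N the element n a n^-1
  lies in P^n' iff n'^-1 n centralizes a.

  If every p-element x has C_N(x) > 1, a p-element x in P also lies in P^m for some m <> 1 in
  C_N(x), so the Sylow subgroups other than P cover all p-elements. Conversely, if those other
  than P^n do, conjugate a p-element x to some a in P; then n a n^-1 lies in some P^n' with
  n' <> n, and n'^-1 n is a nontrivial element of C_N(a), which is conjugate to C_N(x).

  Sylow's conjugacy theorem, absent from the Algebra library, is proved in the usual way: a
  p-subgroup acting by right translation on the cosets of P, whose number is prime to p, fixes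
  one of them.
*)

section \<open>Conjugates and centralizers\<close>

lemma (in group) inv_mult_cancel_left [simp]:
  "x \<in> carrier G \<Longrightarrow> y \<in> carrier G \<Longrightarrow> inv x \<otimes> (x \<otimes> y) = y"
  by (simp add: m_assoc [symmetric])

lemma (in group) mult_inv_cancel_left [simp]:
  "x \<in> carrier G \<Longrightarrow> y \<in> carrier G \<Longrightarrow> x \<otimes> (inv x \<otimes> y) = y"
  by (simp add: m_assoc [symmetric])

lemma (in group) conjugate_eq_image:
  assumes "H \<subseteq> carrier G" "g \<in> carrier G"
  shows "g <# H #> inv g = (\<lambda>h. g \<otimes> h \<otimes> inv g) ` H"
  unfolding l_coset_def r_coset_def by auto

lemma (in group) mem_conjugate_iff:
  assumes "H \<subseteq> carrier G" "g \<in> carrier G"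
  shows "x \<in> g <# H #> inv g \<longleftrightarrow> x \<in> carrier G \<and> inv g \<otimes> x \<otimes> g \<in> H"
proof
  assume "x \<in> g <# H #> inv g"
  then obtain h where h: "h \<in> H" "x = g \<otimes> h \<otimes> inv g"
    using assms by (auto simp: conjugate_eq_image)
  moreover have "h \<in> carrier G"
    using h assms by blast
  ultimately show "x \<in> carrier G \<and> inv g \<otimes> x \<otimes> g \<in> H"
    using assms by (simp add: m_assoc)
next
  assume x: "x \<in> carrier G \<and> inv g \<otimes> x \<otimes> g \<in> H"
  then have "x = g \<otimes> (inv g \<otimes> x \<otimes> g) \<otimes> inv g"
    using assms by (simp add: m_assoc)
  then show "x \<in> g <# H #> inv g"
    using x assms by (auto simp: conjugate_eq_image)
qed

lemma (in group) card_conjugate: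
  assumes "H \<subseteq> carrier G" "g \<in> carrier G"
  shows "card (g <# H #> inv g) = card H"
proof -
  have "inj_on (\<lambda>h. g \<otimes> h \<otimes> inv g) H"
    using assms by (intro inj_onI) (auto intro: conjugation_is_inj)
  then show ?thesis
    using assms by (simp add: conjugate_eq_image card_image)
qed

lemma (in group) conjugate_mult_mem_eq:
  assumes H: "subgroup H G" and g: "g \<in> carrier G" and a: "a \<in> H"
  shows "(g \<otimes> a) <# H #> inv (g \<otimes> a) = g <# H #> inv g"
proof -
  have HG: "H \<subseteq> carrier G" and aG: "a \<in> carrier G"
    using H a subgroup.subset by blast+
  have "(g \<otimes> a) <# H #> inv (g \<otimes> a) = g <# (a <# H) #> inv a #> inv g"
    using HG g aG by (simp add: lcos_m_assoc inv_mult_group coset_mult_assoc l_coset_subset_G)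
  also have "\<dots> = g <# (a <# H #> inv a) #> inv g"
    using HG g aG by (simp add: coset_assoc l_coset_subset_G)
  also have "a <# H #> inv a = H"
    using H a aG by (simp add: coset_join2 coset_join3 subgroup.m_inv_closed)
  finally show ?thesis .
qed

lemma (in group) one_mem_centralizer_in:
  assumes "subgroup N G" "A \<subseteq> carrier G"
  shows "\<one> \<in> centralizer_in G N A"
  using assms subgroup.one_closed by (fastforce simp: centralizer_in_def)

lemma (in group) conjugate_mem_centralizer_in:
  assumes N: "N \<lhd> G" and g: "g \<in> carrier G" and x: "x \<in> carrier G"
    and m: "m \<in> centralizer_in G N {x}"
  shows "g \<otimes> m \<otimes> inv g \<in> centralizer_in G N {g \<otimes> x \<otimes> inv g}"
proof -
  have mN: "m \<in> N" and xm: "x \<otimes> m = m \<otimes> x"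
    using m by (auto simp: centralizer_in_def)
  then have mG: "m \<in> carrier G"
    using N normal_imp_subgroup subgroup.mem_carrier by metis
  have "g \<otimes> x \<otimes> inv g \<otimes> (g \<otimes> m \<otimes> inv g) = g \<otimes> (x \<otimes> m) \<otimes> inv g"
    using g x mG by (simp add: m_assoc)
  also have "\<dots> = g \<otimes> m \<otimes> inv g \<otimes> (g \<otimes> x \<otimes> inv g)"
    using g x mG xm by (simp add: m_assoc)
  finally show ?thesis
    using normal.inv_op_closed2[OF N g mN] by (simp add: centralizer_in_def)
qed

lemma (in group) card_subgroup_dvd:
  assumes "subgroup H G" "subgroup K G" "H \<subseteq> K"
  shows "card H dvd card K"
proof -
  interpret K: group "G\<lparr>carrier := K\<rparr>"
    using assms(2) by (rule subgroup_imp_group)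
  have "subgroup H (G\<lparr>carrier := K\<rparr>)"
    using assms subgroup_incl by blast
  then have "card (rcosets\<^bsub>G\<lparr>carrier := K\<rparr>\<^esub> H) * card H = card K"
    using K.lagrange by (simp add: order_def)
  then show ?thesis by (metis dvd_triv_right)
qed

lemma (in group) subgroups_Int_eq_one_if_coprime_card:
  assumes "subgroup H G" "subgroup K G" "coprime (card H) (card K)"
  shows "H \<inter> K = {\<one>}"
proof -
  have HK: "subgroup (H \<inter> K) G"
    using assms(1,2) by (rule subgroups_Inter_pair)
  then have "card (H \<inter> K) dvd card H" "card (H \<inter> K) dvd card K"
    using assms card_subgroup_dvd by auto
  then have "card (H \<inter> K) = 1"
    using assms(3) coprime_common_divisor_nat by blast
  moreover have "\<one> \<in> H \<inter> K"
    using HK subgroup.one_closed by blast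
  ultimately show ?thesis
    by (metis card_1_singletonE singletonD)
qed

section \<open>Sylow's conjugacy theorem\<close>

lemma (in group) action_by_right_translation_on_power_set:
  "group_action G {S. S \<subseteq> carrier G} (\<lambda>g. \<lambda>S \<in> {S. S \<subseteq> carrier G}. S #> inv g)"
proof -
  let ?E = "{S. S \<subseteq> carrier G}"
  let ?\<phi> = "\<lambda>g. \<lambda>S \<in> ?E. S #> inv g"
  have bij: "?\<phi> g \<in> Bij ?E" if g: "g \<in> carrier G" for g
  proof -
    have "bij_betw (?\<phi> g) ?E ?E"
    proof (rule bij_betw_byWitness[where f' = "\<lambda>S. S #> g"])
      show "\<forall>S\<in>?E. ?\<phi> g S #> g = S" "\<forall>S\<in>?E. ?\<phi> g (S #> g) = S"
        using g by (simp_all add: coset_mult_assoc r_coset_subset_G)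
      show "?\<phi> g ` ?E \<subseteq> ?E"
        using g r_coset_subset_G[of _ "inv g"] by auto
      show "(\<lambda>S. S #> g) ` ?E \<subseteq> ?E"
        using g r_coset_subset_G[of _ g] by auto
    qed
    then show ?thesis by (simp add: Bij_def)
  qed
  have "?\<phi> \<in> hom G (BijGroup ?E)"
  proof (rule homI)
    fix g assume "g \<in> carrier G"
    then show "?\<phi> g \<in> carrier (BijGroup ?E)"
      using bij by (simp add: BijGroup_def)
  next
    fix g h assume g: "g \<in> carrier G" and h: "h \<in> carrier G"
    have "?\<phi> (g \<otimes> h) = compose ?E (?\<phi> g) (?\<phi> h)"
      unfolding compose_def
    proof (rule restrict_ext)
      fix S assume "S \<in> ?E"
      then show "S #> inv (g \<otimes> h) = ?\<phi> g (?\<phi> h S)"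
        using g h by (simp add: coset_mult_assoc inv_mult_group r_coset_subset_G)
    qed
    then show "?\<phi> (g \<otimes> h) = ?\<phi> g \<otimes>\<^bsub>BijGroup ?E\<^esub> ?\<phi> h"
      using bij g h by (simp add: BijGroup_def)
  qed
  then show ?thesis
    unfolding group_action_def group_hom_def
    by (simp add: group_BijGroup group_hom_axioms.intro is_group)
qed

lemma (in group_action) p_group_action_has_fixed_point:
  assumes p: "Factorial_Ring.prime p" and order: "order G = p ^ k"
    and A: "A \<subseteq> E" "finite A" "\<not> p dvd card A"
    and invariant: "\<And>g x. g \<in> carrier G \<Longrightarrow> x \<in> A \<Longrightarrow> \<phi> g x \<in> A"
  shows "\<exists>x\<in>A. \<forall>g\<in>carrier G. \<phi> g x = x"
proof (rule ccontr)
  assume no_fixed_point: "\<not> ?thesis"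
  let ?C = "(\<lambda>x. orbit G \<phi> x) ` A"
  have "\<Union>?C = A"
  proof
    show "\<Union>?C \<subseteq> A"
      using invariant by (auto simp: orbit_def)
    show "A \<subseteq> \<Union>?C"
      using A(1) orbit_refl by blast
  qed
  moreover have "p dvd card c" if "c \<in> ?C" for c
  proof -
    obtain x where x: "x \<in> A" "c = orbit G \<phi> x"
      using \<open>c \<in> ?C\<close> by blast
    have "card c dvd p ^ k"
      using orbit_stabilizer_theorem[of x] x A(1) order by (metis dvd_triv_left subsetD)
    then obtain j where j: "card c = p ^ j"
      using p by (auto simp: divides_primepow_nat)
    have "j \<noteq> 0"
    proof
      assume "j = 0"
      then have "c = {x}"
        using j x A(1) orbit_refl by (metis card_1_singletonE power_0 singletonD subsetD)
      then show False
        using no_fixed_point x by (auto simp: orbit_def)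
    qed
    then show ?thesis
      using j by (simp add: dvd_power)
  qed
  moreover have "c1 \<inter> c2 = {}" if "c1 \<in> ?C" "c2 \<in> ?C" "c1 \<noteq> c2" for c1 c2
    using that disjoint_union A(1) unfolding orbits_def by blast
  ultimately have "p dvd card A"
    using dvd_partition[of ?C p] A(2) by metis
  then show False
    using A(3) by contradiction
qed

lemma (in group) conjugate_Sylow:
  assumes "Q \<in> Sylow_subgroups G p" "g \<in> carrier G"
  shows "g <# Q #> inv g \<in> Sylow_subgroups G p"
proof -
  have "subgroup Q G" "card Q = p ^ multiplicity p (order G)"
    using assms(1) by (simp_all add: Sylow_subgroups_def)
  then show ?thesis
    using assms(2) subgroup_conjugation_is_surj2 card_conjugate[OF subgroup.subset]
    by (simp add: Sylow_subgroups_def)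
qed

lemma (in group) not_dvd_card_rcosets_Sylow:
  assumes fin: "finite (carrier G)" and p: "Factorial_Ring.prime p"
    and P: "P \<in> Sylow_subgroups G p"
  shows "\<not> p dvd card (rcosets P)"
proof -
  let ?q = "p ^ multiplicity p (order G)"
  have "card (rcosets P) * ?q = order G"
    using P lagrange[of P] by (simp add: Sylow_subgroups_def)
  moreover have "?q \<noteq> 0"
    using p by (simp add: prime_gt_0_nat)
  ultimately have "card (rcosets P) = order G div ?q"
    by (metis nonzero_mult_div_cancel_right)
  moreover have "\<not> p dvd order G div ?q"
    using multiplicity_decompose[of "order G" p] fin p
    by (auto simp: order_gt_0_iff_finite prime_nat_iff)
  ultimately show ?thesis
    by simp
qed

lemma (in group) mem_conjugate_if_rcoset_fixed:
  assumes P: "subgroup P G" and a: "a \<in> carrier G" and h: "h \<in> carrier G"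
    and fixed: "P #> (a \<otimes> inv h) = P #> a"
  shows "h \<in> inv a <# P #> a"
proof -
  have "a \<otimes> inv h \<otimes> inv a \<in> P"
    using fixed a h P
    by (metis subgroup.rcos_module_imp is_group m_closed inv_closed repr_independenceD)
  then have "inv (a \<otimes> inv h \<otimes> inv a) \<in> P"
    by (rule subgroup.m_inv_closed[OF P])
  then show ?thesis
    using mem_conjugate_iff[OF subgroup.subset[OF P] inv_closed[OF a]] a h
    by (simp add: inv_mult_group m_assoc)
qed

lemma (in group) p_subgroup_subset_conjugate_Sylow:
  assumes fin: "finite (carrier G)" and p: "Factorial_Ring.prime p"
    and P: "P \<in> Sylow_subgroups G p" and H: "subgroup H G" "card H = p ^ k"
  shows "\<exists>g\<in>carrier G. H \<subseteq> g <# P #> inv g"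
proof -
  let ?E = "{S. S \<subseteq> carrier G}"
  let ?\<phi> = "\<lambda>g. \<lambda>S \<in> ?E. S #> inv g"
  interpret H: group_action "G\<lparr>carrier := H\<rparr>" ?E ?\<phi>
    using group_action.induced_action[OF action_by_right_translation_on_power_set H(1)] .
  have subgroup_P: "subgroup P G"
    using P by (simp add: Sylow_subgroups_def)
  then have PG: "P \<subseteq> carrier G"
    by (rule subgroup.subset)
  have HG: "H \<subseteq> carrier G"
    using H(1) by (rule subgroup.subset)
  have translate: "?\<phi> h (P #> a) = P #> (a \<otimes> inv h)" if "a \<in> carrier G" "h \<in> H" for a h
    using that PG HG by (auto simp: coset_mult_assoc r_coset_subset_G)
  have "\<exists>S\<in>rcosets P. \<forall>h\<in>carrier (G\<lparr>carrier := H\<rparr>). ?\<phi> h S = S"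
  proof (rule H.p_group_action_has_fixed_point[OF p])
    show "order (G\<lparr>carrier := H\<rparr>) = p ^ k"
      using H(2) by (simp add: order_def)
    show "rcosets P \<subseteq> ?E" "finite (rcosets P)"
      using rcosets_subset_PowG[OF subgroup_P] fin finite_subset by auto
    show "\<not> p dvd card (rcosets P)"
      using not_dvd_card_rcosets_Sylow[OF fin p P] .
    show "?\<phi> h S \<in> rcosets P" if h: "h \<in> carrier (G\<lparr>carrier := H\<rparr>)" and S: "S \<in> rcosets P" for h S
    proof -
      obtain a where "a \<in> carrier G" "S = P #> a"
        using S by (auto simp: RCOSETS_def)
      moreover have "h \<in> carrier G"
        using h HG by auto
      ultimately show ?thesis
        using h translate PG by (simp add: rcosetsI)
    qed
  qed
  then obtain a where a: "a \<in> carrier G" and fixed: "\<forall>h\<in>H. ?\<phi> h (P #> a) = P #> a"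
    by (auto simp: RCOSETS_def)
  have "H \<subseteq> inv a <# P #> a"
  proof
    fix h assume h: "h \<in> H"
    then have "P #> (a \<otimes> inv h) = P #> a"
      using fixed translate a by simp
    then show "h \<in> inv a <# P #> a"
      using mem_conjugate_if_rcoset_fixed[OF subgroup_P a] h HG by blast
  qed
  then show ?thesis
    using a by (intro bexI[of _ "inv a"]) simp_all
qed

lemma (in group) Sylow_conjugate:
  assumes fin: "finite (carrier G)" and p: "Factorial_Ring.prime p"
    and P: "P \<in> Sylow_subgroups G p" and Q: "Q \<in> Sylow_subgroups G p"
  shows "\<exists>g\<in>carrier G. Q = g <# P #> inv g"
proof -
  have Q': "subgroup Q G" "card Q = p ^ multiplicity p (order G)"
    using Q by (simp_all add: Sylow_subgroups_def)
  obtain g where g: "g \<in> carrier G" "Q \<subseteq> g <# P #> inv g"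
    using p_subgroup_subset_conjugate_Sylow[OF fin p P Q'] by blast
  have "g <# P #> inv g \<in> Sylow_subgroups G p"
    using P g(1) by (rule conjugate_Sylow)
  then have "subgroup (g <# P #> inv g) G" "card (g <# P #> inv g) = card Q"
    using Q' by (simp_all add: Sylow_subgroups_def)
  then have "Q = g <# P #> inv g"
    using card_subset_eq[OF finite_subset[OF subgroup.subset fin] g(2)] by simp
  then show ?thesis
    using g(1) by blast
qed

lemma (in group) Sylow_subgroups_nonempty:
  assumes "finite (carrier G)" "Factorial_Ring.prime p"
  shows "Sylow_subgroups G p \<noteq> {}"
proof -
  have "order G = p ^ multiplicity p (order G) * (order G div p ^ multiplicity p (order G))"
    by (simp add: multiplicity_dvd)
  then show ?thesis
    using sylow_thm[OF assms(2) is_group _ assms(1)] by (auto simp: Sylow_subgroups_def)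
qed

lemma (in group) p_elements_eq_Union_Sylow:
  assumes fin: "finite (carrier G)" and p: "Factorial_Ring.prime p"
  shows "p_elements G p = \<Union> (Sylow_subgroups G p)"
proof
  show "\<Union> (Sylow_subgroups G p) \<subseteq> p_elements G p"
  proof
    fix x assume "x \<in> \<Union> (Sylow_subgroups G p)"
    then obtain Q where Q: "subgroup Q G" "card Q = p ^ multiplicity p (order G)" "x \<in> Q"
      by (auto simp: Sylow_subgroups_def)
    then have x: "x \<in> carrier G"
      using subgroup.mem_carrier by metis
    have "generate G {x} \<subseteq> Q"
      using Q(1,3) by (intro generate_subgroup_incl) auto
    then have "card (generate G {x}) dvd card Q"
      using Q(1) x by (intro card_subgroup_dvd generate_is_subgroup) auto
    then have "ord x dvd p ^ multiplicity p (order G)"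
      using Q(2) x by (simp add: generate_pow_card)
    then obtain e where "ord x = p ^ e"
      using p by (auto simp: divides_primepow_nat)
    then show "x \<in> p_elements G p"
      using x by (auto simp: p_elements_def)
  qed
next
  show "p_elements G p \<subseteq> \<Union> (Sylow_subgroups G p)"
  proof
    fix x assume "x \<in> p_elements G p"
    then obtain e where x: "x \<in> carrier G" "card (generate G {x}) = p ^ e"
      unfolding p_elements_def using generate_pow_card by auto
    obtain P where P: "P \<in> Sylow_subgroups G p"
      using Sylow_subgroups_nonempty[OF fin p] by blast
    obtain g where "g \<in> carrier G" "generate G {x} \<subseteq> g <# P #> inv g"
      using p_subgroup_subset_conjugate_Sylow[OF fin p P _ x(2)] generate_is_subgroup x(1) by blast
    moreover have "x \<in> generate G {x}"
      by (simp add: generate.incl)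
    ultimately show "x \<in> \<Union> (Sylow_subgroups G p)"
      using conjugate_Sylow[OF P] by blast
  qed
qed

section \<open>Sylow subgroups with a normal complement\<close>

locale Sylow_normal_complement = group G for G (structure) +
  fixes p :: nat and P N :: "'a set"
  assumes finite_carrier: "finite (carrier G)"
    and prime_p: "Factorial_Ring.prime p"
    and Sylow_P: "P \<in> Sylow_subgroups G p"
    and normal_N: "N \<lhd> G"
    and P_mult_N: "P <#> N = carrier G"
    and coprime_card: "coprime (card P) (card N)"
    and centralizer_P: "centralizer_in G N P = {\<one>}"
begin

lemma subgroup_P: "subgroup P G"
  using Sylow_P by (simp add: Sylow_subgroups_def)

lemma subgroup_N: "subgroup N G"
  using normal_N by (rule normal_imp_subgroup)

lemma P_subset: "P \<subseteq> carrier G"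
  using subgroup_P by (rule subgroup.subset)

lemma N_subset: "N \<subseteq> carrier G"
  using subgroup_N by (rule subgroup.subset)

lemma commute_if_conjugate_mem_P:
  assumes a: "a \<in> P" and m: "m \<in> N" and conj: "m \<otimes> a \<otimes> inv m \<in> P"
  shows "a \<otimes> m = m \<otimes> a"
proof -
  have aG: "a \<in> carrier G" and mG: "m \<in> carrier G"
    using a m P_subset N_subset by auto
  let ?c = "m \<otimes> a \<otimes> inv m \<otimes> inv a"
  have "?c \<in> P"
    using subgroup_P conj a by (simp add: subgroup.m_closed subgroup.m_inv_closed)
  moreover have "a \<otimes> inv m \<otimes> inv a \<in> N"
    using normal.inv_op_closed2[OF normal_N aG] subgroup.m_inv_closed[OF subgroup_N m] .
  then have "?c \<in> N"
    using subgroup.m_closed[OF subgroup_N m] aG mG by (simp add: m_assoc)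
  ultimately have "?c = \<one>"
    using subgroups_Int_eq_one_if_coprime_card[OF subgroup_P subgroup_N coprime_card] by blast
  then have "m \<otimes> a \<otimes> inv m = a"
    using aG mG by (metis inv_closed inv_solve_right m_closed one_closed l_one)
  then show ?thesis
    using aG mG by (metis inv_solve_right m_closed)
qed

lemma conjugate_mem_conjugate_P_iff:
  assumes a: "a \<in> P" and n: "n \<in> N" and n': "n' \<in> N"
  shows "n \<otimes> a \<otimes> inv n \<in> n' <# P #> inv n' \<longleftrightarrow> inv n' \<otimes> n \<in> centralizer_in G N {a}"
proof -
  let ?m = "inv n' \<otimes> n"
  have aG: "a \<in> carrier G" and nG: "n \<in> carrier G" and n'G: "n' \<in> carrier G"
    using a n n' P_subset N_subset by auto
  have mN: "?m \<in> N"
    using subgroup_N n n' by (simp add: subgroup.m_closed subgroup.m_inv_closed)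
  have "n \<otimes> a \<otimes> inv n \<in> n' <# P #> inv n' \<longleftrightarrow> ?m \<otimes> a \<otimes> inv ?m \<in> P"
    using aG nG n'G by (simp add: mem_conjugate_iff[OF P_subset] inv_mult_group m_assoc)
  also have "\<dots> \<longleftrightarrow> a \<otimes> ?m = ?m \<otimes> a"
  proof
    show "?m \<otimes> a \<otimes> inv ?m \<in> P \<Longrightarrow> a \<otimes> ?m = ?m \<otimes> a"
      using a mN by (rule commute_if_conjugate_mem_P)
    show "a \<otimes> ?m = ?m \<otimes> a \<Longrightarrow> ?m \<otimes> a \<otimes> inv ?m \<in> P"
      using a aG nG n'G by (metis inv_solve_right m_closed inv_closed)
  qed
  finally show ?thesis
    using mN by (simp add: centralizer_in_def)
qed

lemma conjugate_P_inj_on_N: "inj_on (\<lambda>n. n <# P #> inv n) N"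
proof (rule inj_onI)
  fix n n' assume n: "n \<in> N" and n': "n' \<in> N" and eq: "n <# P #> inv n = n' <# P #> inv n'"
  have nG: "n \<in> carrier G" and n'G: "n' \<in> carrier G"
    using n n' N_subset by auto
  have "inv n' \<otimes> n \<in> centralizer_in G N {a}" if a: "a \<in> P" for a
  proof -
    have "n \<otimes> a \<otimes> inv n \<in> n' <# P #> inv n'"
      using a nG P_subset eq[symmetric] by (simp add: conjugate_eq_image)
    then show ?thesis
      using conjugate_mem_conjugate_P_iff[OF a n n'] by blast
  qed
  moreover have "inv n' \<otimes> n \<in> N"
    using subgroup_N n n' by (simp add: subgroup.m_closed subgroup.m_inv_closed)
  ultimately have "inv n' \<otimes> n \<in> centralizer_in G N P"
    unfolding centralizer_in_def by blast
  then have "n' \<otimes> (inv n' \<otimes> n) = n'"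
    using centralizer_P n'G by simp
  then show "n = n'"
    using nG n'G by simp
qed

lemma Sylow_subgroups_eq_conjugates_by_N:
  "Sylow_subgroups G p = (\<lambda>n. n <# P #> inv n) ` N"
proof
  show "(\<lambda>n. n <# P #> inv n) ` N \<subseteq> Sylow_subgroups G p"
    using conjugate_Sylow[OF Sylow_P] N_subset by blast
next
  show "Sylow_subgroups G p \<subseteq> (\<lambda>n. n <# P #> inv n) ` N"
  proof
    fix Q assume "Q \<in> Sylow_subgroups G p"
    then obtain g where g: "g \<in> carrier G" "Q = g <# P #> inv g"
      using Sylow_conjugate[OF finite_carrier prime_p Sylow_P] by blast
    have "N <#> P = carrier G"
      using P_mult_N commut_normal[OF subgroup_P normal_N] by simp
    then obtain n a where "n \<in> N" "a \<in> P" "g = n \<otimes> a"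
      using g(1) unfolding set_mult_def by blast
    moreover have "n \<in> carrier G"
      using \<open>n \<in> N\<close> N_subset by blast
    ultimately show "Q \<in> (\<lambda>n. n <# P #> inv n) ` N"
      using g(2) conjugate_mult_mem_eq[OF subgroup_P] by auto
  qed
qed

lemma has_redundant_Sylow_if_centralizers_nontrivial:
  assumes nontrivial: "\<forall>x\<in>p_elements G p. centralizer_in G N {x} \<noteq> {\<one>}"
  shows "has_redundant_Sylow G p"
proof -
  let ?S = "Sylow_subgroups G p - {P}"
  have "p_elements G p \<subseteq> \<Union>?S"
  proof
    fix x assume x: "x \<in> p_elements G p"
    then obtain Q where Q: "Q \<in> Sylow_subgroups G p" "x \<in> Q"
      using p_elements_eq_Union_Sylow[OF finite_carrier prime_p] by blast
    show "x \<in> \<Union>?S"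
    proof (cases "Q = P")
      case False
      then show ?thesis
        using Q by blast
    next
      case True
      have xG: "x \<in> carrier G"
        using x by (simp add: p_elements_def)
      obtain m where m: "m \<in> centralizer_in G N {x}" "m \<noteq> \<one>"
        using nontrivial x one_mem_centralizer_in[OF subgroup_N, of "{x}"] xG by blast
      then have mN: "m \<in> N" and mG: "m \<in> carrier G"
        using N_subset by (auto simp: centralizer_in_def)
      have inv_mN: "inv m \<in> N"
        using subgroup_N mN by (rule subgroup.m_inv_closed)
      have "x \<in> inv m <# P #> inv (inv m)"
        using conjugate_mem_conjugate_P_iff[OF _ subgroup.one_closed[OF subgroup_N] inv_mN, of x]
          Q True m(1) mG xG by simp
      moreover have "inv m <# P #> inv (inv m) \<noteq> \<one> <# P #> inv \<one>"
        using inj_on_eq_iff[OF conjugate_P_inj_on_N inv_mN subgroup.one_closed[OF subgroup_N]]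
          m(2) mG by (metis inv_inv inv_one)
      moreover have "\<one> <# P #> inv \<one> = P"
        using P_subset by (simp add: lcos_mult_one)
      ultimately show ?thesis
        using conjugate_Sylow[OF Sylow_P] inv_mN N_subset by blast
    qed
  qed
  moreover have "?S \<subset> Sylow_subgroups G p"
    using Sylow_P by blast
  ultimately show ?thesis
    unfolding has_redundant_Sylow_def by blast
qed

lemma centralizer_nontrivial_if_has_redundant_Sylow:
  assumes redundant: "has_redundant_Sylow G p" and x: "x \<in> p_elements G p"
  shows "centralizer_in G N {x} \<noteq> {\<one>}"
proof -
  note Sylow_eq = Sylow_subgroups_eq_conjugates_by_N
  note p_elements_eq = p_elements_eq_Union_Sylow[OF finite_carrier prime_p]
  obtain S where S: "S \<subset> Sylow_subgroups G p" "p_elements G p \<subseteq> \<Union>S"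
    using redundant unfolding has_redundant_Sylow_def by blast
  then obtain Q where "Q \<in> Sylow_subgroups G p" "Q \<notin> S"
    by blast
  then obtain n where n: "n \<in> N" "n <# P #> inv n \<notin> S"
    unfolding Sylow_eq by blast
  from x obtain k where k: "k \<in> N" "x \<in> k <# P #> inv k"
    unfolding p_elements_eq Sylow_eq by blast
  have nG: "n \<in> carrier G" and kG: "k \<in> carrier G"
    using n(1) k(1) N_subset by auto
  define a where "a = inv k \<otimes> x \<otimes> k"
  have a: "a \<in> P" and xG: "x \<in> carrier G"
    using k(2) mem_conjugate_iff[OF P_subset kG] unfolding a_def by auto
  have x_eq: "x = k \<otimes> a \<otimes> inv k"
    using kG xG unfolding a_def by (simp add: m_assoc)
  have "n \<otimes> a \<otimes> inv n \<in> n <# P #> inv n"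
    using a nG P_subset by (simp add: conjugate_eq_image)
  then have "n \<otimes> a \<otimes> inv n \<in> p_elements G p"
    unfolding p_elements_eq using conjugate_Sylow[OF Sylow_P nG] by blast
  then obtain R where R: "R \<in> S" "n \<otimes> a \<otimes> inv n \<in> R"
    using S(2) by blast
  then have "R \<in> Sylow_subgroups G p"
    using S(1) by blast
  then obtain n' where n': "n' \<in> N" "R = n' <# P #> inv n'"
    unfolding Sylow_eq by blast
  have n'G: "n' \<in> carrier G"
    using n'(1) N_subset by auto
  let ?m = "inv n' \<otimes> n"
  have m: "?m \<in> centralizer_in G N {a}"
    using conjugate_mem_conjugate_P_iff[OF a n(1) n'(1)] R(2) n'(2) by simp
  have "?m \<noteq> \<one>"
  proof
    assume "?m = \<one>"
    then have "n' \<otimes> ?m = n'"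
      using n'G by simp
    then have "n = n'"
      using nG n'G by simp
    then show False
      using n(2) R(1) n'(2) by simp
  qed
  then have "k \<otimes> ?m \<otimes> inv k \<noteq> \<one>"
    using kG nG n'G conjugation_is_inj[of k ?m \<one>] by auto
  moreover have "k \<otimes> ?m \<otimes> inv k \<in> centralizer_in G N {x}"
    unfolding x_eq using conjugate_mem_centralizer_in[OF normal_N kG _ m] a P_subset by blast
  ultimately show ?thesis
    by blast
qed

end

theorem corollary3p2:
  fixes G :: "('a, 'b) monoid_scheme" and p :: nat and P N :: "'a set"
  assumes "group G" and "finite (carrier G)" and "Factorial_Ring.prime p"
    and "P \<in> Sylow_subgroups G p" and "P \<noteq> {\<one>\<^bsub>G\<^esub>}"
    and "N \<lhd> G"
    and "P <#>\<^bsub>G\<^esub> N = carrier G"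
    and "coprime (card P) (card N)"
    and "centralizer_in G N P = {\<one>\<^bsub>G\<^esub>}"
  shows "has_redundant_Sylow G p \<longleftrightarrow>
           (\<forall>x \<in> p_elements G p. centralizer_in G N {x} \<noteq> {\<one>\<^bsub>G\<^esub>})"
proof -
  interpret Sylow_normal_complement G p P N
    using assms by (simp add: Sylow_normal_complement_def Sylow_normal_complement_axioms_def)
  show ?thesis
    using has_redundant_Sylow_if_centralizers_nontrivial
      centralizer_nontrivial_if_has_redundant_Sylow by blast
qed

end
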